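(* Let $0\le k\le\infty$, let $M$ be a $C^k$ manifold, $\mathbb F\in\{\mathbb R,\mathbb C\}$, and let $\mathcal B$ be a family of functions closed under pointwise multiplication with $C^k_c(M,\mathbb F)\subset\mathcal B\subset C^k(M,\mathbb F)$. Let $T:\mathcal B\to\mathcal B$ be a bijection with $T(fg)=Tf\cdot Tg$ for all $f,g\in\mathcal B$, which restricts to a bijection of $C^k_c(M,\mathbb F)$ onto itself. Then there exists a homeomorphism $u:M\to M$ such that $u(Z(f))=Z(Tf)$ for all $f\in\mathcal B$.
   Context: Manifolds are Hausdorff and second countable. $Z(f)=\{x\in M:f(x)=0\}$; $C^k_c$ denotes compactly supported $C^k$ functions. *)

theory Defs
  imports "HOL-Analysis.Analysis" "HOL-Library.Extended_Nat"
begin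

text \<open>C^0 = continuous; C^(n+1) = Frechet differentiable at each point of U with derivative
  g' x such that for every direction v the map x \<mapsto> g' x v is C^n on U.
  (In finite dimensions this is the usual notion of C^(n+1).)\<close>
fun Cn_on :: "nat \<Rightarrow> ('e::euclidean_space \<Rightarrow> 'f::real_normed_vector) \<Rightarrow> 'e set \<Rightarrow> bool" where
  "Cn_on 0 g U = continuous_on U g"
| "Cn_on (Suc n) g U =
     (\<exists>g'. (\<forall>x\<in>U. (g has_derivative g' x) (at x)) \<and> (\<forall>v. Cn_on n (\<lambda>x. g' x v) U))"

definition Ck_on :: "enat \<Rightarrow> ('e::euclidean_space \<Rightarrow> 'f::real_normed_vector) \<Rightarrow> 'e set \<Rightarrow> bool" where
  "Ck_on k g U \<longleftrightarrow> (\<forall>n. enat n \<le> k \<longrightarrow> Cn_on n g U)"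

definition Ck_atlas :: "enat \<Rightarrow> ('a::topological_space set \<times> ('a \<Rightarrow> 'e::euclidean_space)) set \<Rightarrow> bool" where
  "Ck_atlas k A \<longleftrightarrow>
     \<Union>(fst ` A) = UNIV \<and>
     (\<forall>(U, \<phi>)\<in>A. open U \<and> open (\<phi> ` U) \<and> homeomorphism U (\<phi> ` U) \<phi> (inv_into U \<phi>)) \<and>
     (\<forall>(U, \<phi>)\<in>A. \<forall>(V, \<psi>)\<in>A. Ck_on k (\<psi> \<circ> inv_into U \<phi>) (\<phi> ` (U \<inter> V)))"

definition Ck_fun :: "enat \<Rightarrow> ('a::topological_space set \<times> ('a \<Rightarrow> 'e::euclidean_space)) set \<Rightarrow> ('a \<Rightarrow> 'f::real_normed_vector) \<Rightarrow> bool" where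
  "Ck_fun k A f \<longleftrightarrow> (\<forall>(U, \<phi>)\<in>A. Ck_on k (f \<circ> inv_into U \<phi>) (\<phi> ` U))"

definition Ckc_fun :: "enat \<Rightarrow> ('a::topological_space set \<times> ('a \<Rightarrow> 'e::euclidean_space)) set \<Rightarrow> ('a \<Rightarrow> 'f::real_normed_vector) \<Rightarrow> bool" where
  "Ckc_fun k A f \<longleftrightarrow> Ck_fun k A f \<and> compact (closure {x. f x \<noteq> 0})"

definition zero_set :: "('a \<Rightarrow> 'f::zero) \<Rightarrow> 'a set" where
  "zero_set f = {x. f x = 0}"

end

theory Submission
  imports Defs "HOL-Computational_Algebra.Polynomial"
begin

text \<open>
  Proof idea (Gelfand--Kolmogorov style).  For a point x of M consider the set of points y
  such that y lies in the support of T f for every compactly supported f with f x \<noteq> 0.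
  Using plateau functions (C^k_c functions that are 1 near x and supported in a given open
  set), multiplicativity of T and the fact that T permutes C^k_c, this set is shown to be a
  singleton {u x}, and T f (u x) \<noteq> 0 whenever f x \<noteq> 0, while T f (u x) = 0 whenever
  x is outside the support of f.  Doing the same for T\<inverse> yields a map v, and these
  properties force v = u\<inverse>, T f (u x) = 0 \<longleftrightarrow> f x = 0, and continuity of u and v.
\<close>

subsection \<open>C^n calculus on Euclidean spaces\<close>

lemma Cn_Suc_imp_Cn: "Cn_on (Suc n) g U \<Longrightarrow> Cn_on n g U"
proof (induction n arbitrary: g)
  case 0
  then obtain g' where "\<forall>x\<in>U. (g has_derivative g' x) (at x)" by auto
  then show ?case
    by (auto intro!: continuous_at_imp_continuous_on has_derivative_continuous)
next
  case (Suc n)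
  then obtain g' where "\<forall>x\<in>U. (g has_derivative g' x) (at x)" "\<forall>v. Cn_on (Suc n) (\<lambda>x. g' x v) U"
    by auto
  with Suc.IH show ?case by auto
qed

lemma Cn_const: "Cn_on n (\<lambda>x. c) U"
proof (induction n arbitrary: c)
  case 0 then show ?case by simp
next
  case (Suc n)
  show ?case by (auto intro!: exI[of _ "\<lambda>x h. 0"] Suc)
qed

lemma Cn_linear_comp: "bounded_linear L \<Longrightarrow> Cn_on n g U \<Longrightarrow> Cn_on n (\<lambda>x. L (g x)) U"
proof (induction n arbitrary: g)
  case 0
  then show ?case
    using continuous_on_compose2[of UNIV L U g] by (simp add: linear_continuous_on)
next
  case (Suc n)
  then obtain g' where g: "\<forall>x\<in>U. (g has_derivative g' x) (at x)" "\<forall>v. Cn_on n (\<lambda>x. g' x v) U"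
    by auto
  have "\<forall>x\<in>U. ((\<lambda>x. L (g x)) has_derivative (\<lambda>h. L (g' x h))) (at x)"
    using g(1) bounded_linear.has_derivative[OF Suc.prems(1)] by blast
  moreover have "\<forall>v. Cn_on n (\<lambda>x. L (g' x v)) U" using g(2) Suc.IH Suc.prems(1) by blast
  ultimately show ?case unfolding Cn_on.simps by (intro exI[where x="\<lambda>x h. L (g' x h)"]) blast
qed

lemma Cn_linear: "bounded_linear L \<Longrightarrow> Cn_on n L U"
proof (induction n)
  case 0 then show ?case by (simp add: linear_continuous_on)
next
  case (Suc n)
  have "\<forall>x\<in>U. (L has_derivative (\<lambda>h. L h)) (at x)"
    using Suc.prems bounded_linear_imp_has_derivative by blast
  then show ?case unfolding Cn_on.simps by (intro exI[where x="\<lambda>x h. L h"]) (simp add: Cn_const)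
qed

lemma Cn_add: "Cn_on n f U \<Longrightarrow> Cn_on n g U \<Longrightarrow> Cn_on n (\<lambda>x. f x + g x) U"
proof (induction n arbitrary: f g)
  case 0 then show ?case by (auto intro: continuous_on_add)
next
  case (Suc n)
  from Suc.prems obtain f' where "\<forall>x\<in>U. (f has_derivative f' x) (at x)" "\<forall>v. Cn_on n (\<lambda>x. f' x v) U"
    by auto
  moreover from Suc.prems obtain g' where "\<forall>x\<in>U. (g has_derivative g' x) (at x)" "\<forall>v. Cn_on n (\<lambda>x. g' x v) U"
    by auto
  ultimately show ?case
    by (auto intro!: exI[of _ "\<lambda>x h. f' x h + g' x h"] Suc.IH has_derivative_add)
qed

lemma Cn_sum:
  fixes f :: "'i \<Rightarrow> 'e::euclidean_space \<Rightarrow> 'f::real_normed_vector"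
  shows "finite I \<Longrightarrow> (\<And>i. i \<in> I \<Longrightarrow> Cn_on n (f i) U) \<Longrightarrow> Cn_on n (\<lambda>x. \<Sum>i\<in>I. f i x) U"
  by (induction I rule: finite_induct) (auto intro: Cn_add Cn_const)

lemma Cn_bilinear:
  assumes "bounded_bilinear pr"
  shows "Cn_on n a U \<Longrightarrow> Cn_on n b U \<Longrightarrow> Cn_on n (\<lambda>x. pr (a x) (b x)) U"
proof (induction n arbitrary: a b)
  case 0 then show ?case
    using bounded_bilinear.continuous_on[OF assms] by auto
next
  case (Suc n)
  from Suc.prems obtain a' where a: "\<forall>x\<in>U. (a has_derivative a' x) (at x)" "\<forall>v. Cn_on n (\<lambda>x. a' x v) U"
    by auto
  from Suc.prems obtain b' where b: "\<forall>x\<in>U. (b has_derivative b' x) (at x)" "\<forall>v. Cn_on n (\<lambda>x. b' x v) U"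
    by auto
  have "Cn_on n a U" "Cn_on n b U" using Suc.prems Cn_Suc_imp_Cn by blast+
  with a b show ?case
    by (auto intro!: exI[of _ "\<lambda>x h. pr (a x) (b' x h) + pr (a' x h) (b x)"]
        Cn_add Suc.IH bounded_bilinear.FDERIV[OF assms])
qed

lemma Cn_mult: "Cn_on n a U \<Longrightarrow> Cn_on n b U \<Longrightarrow> Cn_on n (\<lambda>x. a x * b x :: 'f::real_normed_algebra) U"
  by (rule Cn_bilinear[OF bounded_bilinear_mult])

text \<open>Chain rule.  The derivative of g \<circ> h in direction v is expanded in the standard
  basis, \<Sum>i. (h' x v \<bullet> i) g' (h x) i, which exhibits it as a sum of products of C^n maps.\<close>
lemma Cn_chain:
  fixes h :: "'e::euclidean_space \<Rightarrow> 'e2::euclidean_space" and g :: "'e2 \<Rightarrow> 'f::real_normed_vector"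
  shows "Cn_on n g V \<Longrightarrow> Cn_on n h U \<Longrightarrow> h ` U \<subseteq> V \<Longrightarrow> Cn_on n (\<lambda>x. g (h x)) U"
proof (induction n arbitrary: g)
  case 0 then show ?case by (auto intro: continuous_on_compose2)
next
  case (Suc n)
  from Suc.prems obtain g' where g: "\<forall>y\<in>V. (g has_derivative g' y) (at y)" "\<forall>v. Cn_on n (\<lambda>y. g' y v) V"
    by auto
  from Suc.prems obtain h' where h: "\<forall>x\<in>U. (h has_derivative h' x) (at x)" "\<forall>v. Cn_on n (\<lambda>x. h' x v) U"
    by auto
  define D where "D x v = (\<Sum>i\<in>Basis. (h' x v \<bullet> i) *\<^sub>R g' (h x) i)" for x v
  have "Cn_on n (\<lambda>x. D x v) U" for v
    unfolding D_def
  proof (rule Cn_sum[OF finite_Basis], rule Cn_bilinear[OF bounded_bilinear_scaleR])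
    show "Cn_on n (\<lambda>x. h' x v \<bullet> i) U" for i
      by (rule Cn_linear_comp[OF bounded_linear_inner_left]) (use h(2) in blast)
    show "Cn_on n (\<lambda>x. g' (h x) i) U" for i
      using Suc.IH g(2) Cn_Suc_imp_Cn Suc.prems by blast
  qed
  moreover have "((\<lambda>x. g (h x)) has_derivative D x) (at x)" if "x \<in> U" for x
  proof -
    have lin: "linear (g' (h x))" using g(1) Suc.prems(3) that by (auto intro: has_derivative_linear)
    have "g' (h x) (h' x v) = D x v" for v
      unfolding D_def
      by (subst (1) euclidean_representation[symmetric]) (simp add: linear_sum[OF lin] linear_scale[OF lin])
    then have "(\<lambda>v. g' (h x) (h' x v)) = D x" by (rule ext)
    moreover have "((\<lambda>x. g (h x)) has_derivative (\<lambda>v. g' (h x) (h' x v))) (at x)"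
      using has_derivative_compose[of h "h' x" x UNIV g "g' (h x)"] g(1) h(1) Suc.prems(3) that by auto
    ultimately show ?thesis by simp
  qed
  ultimately show ?case unfolding Cn_on.simps by (intro exI[where x=D]) blast
qed

lemma Cn_subset: "V \<subseteq> U \<Longrightarrow> Cn_on n f U \<Longrightarrow> Cn_on n f V"
proof (induction n arbitrary: f)
  case 0 then show ?case by (auto intro: continuous_on_subset)
next
  case (Suc n)
  then obtain f' where "\<forall>x\<in>U. (f has_derivative f' x) (at x)" "\<forall>v. Cn_on n (\<lambda>x. f' x v) U"
    by auto
  with Suc show ?case unfolding Cn_on.simps by (intro exI[where x=f']) blast
qed

lemma Cn_cong: "open U \<Longrightarrow> (\<And>x. x \<in> U \<Longrightarrow> f x = g x) \<Longrightarrow> Cn_on n f U \<Longrightarrow> Cn_on n g U"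
proof (induction n arbitrary: f g)
  case 0 then show ?case using continuous_on_cong by force
next
  case (Suc n)
  then obtain f' where f: "\<forall>x\<in>U. (f has_derivative f' x) (at x)" "\<forall>v. Cn_on n (\<lambda>x. f' x v) U"
    by auto
  have "\<forall>x\<in>U. (g has_derivative f' x) (at x)"
    using f(1) has_derivative_transform_within_open[of f _ _ UNIV U g] Suc.prems(1,2) by blast
  with f(2) show ?case unfolding Cn_on.simps by (intro exI[where x=f']) blast
qed

text \<open>Being C^n is a local property on open sets.  In the inductive step the local
  derivatives are glued to the Frechet derivative, which they agree with by uniqueness.\<close>
lemma Cn_local:
  "open U \<Longrightarrow> (\<And>x. x \<in> U \<Longrightarrow> \<exists>V. open V \<and> x \<in> V \<and> V \<subseteq> U \<and> Cn_on n f V) \<Longrightarrow> Cn_on n f U"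
proof (induction n arbitrary: f)
  case 0
  have "isCont f x" if xU: "x \<in> U" for x
  proof -
    obtain V where "open V" "x \<in> V" "continuous_on V f" using 0(2)[OF xU] by auto
    then show ?thesis using continuous_on_eq_continuous_at[OF \<open>open V\<close>] by blast
  qed
  then show ?case by (simp add: continuous_at_imp_continuous_on)
next
  case (Suc n)
  define D where "D x = frechet_derivative f (at x)" for x
  have loc: "\<exists>V f'. open V \<and> x \<in> V \<and> V \<subseteq> U \<and> (\<forall>y\<in>V. (f has_derivative f' y) (at y))
     \<and> (\<forall>v. Cn_on n (\<lambda>y. f' y v) V)" if xU: "x \<in> U" for x
  proof -
    obtain V where V: "open V" "x\<in>V" "V\<subseteq>U" "Cn_on (Suc n) f V" using Suc.prems(2)[OF xU] by blast
    from V(4) obtain f' where "\<forall>y\<in>V. (f has_derivative f' y) (at y)" "\<forall>v. Cn_on n (\<lambda>y. f' y v) V"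
      unfolding Cn_on.simps by blast
    with V show ?thesis by blast
  qed
  have D: "(f has_derivative D y) (at y)" if yU: "y \<in> U" for y
  proof -
    obtain V f' where "y \<in> V" "\<forall>y\<in>V. (f has_derivative f' y) (at y)" using loc[OF yU] by blast
    then have "f differentiable (at y)" unfolding differentiable_def by blast
    then show ?thesis unfolding D_def frechet_derivative_works .
  qed
  have "Cn_on n (\<lambda>y. D y v) U" for v
  proof (rule Suc.IH[OF Suc.prems(1)])
    fix x assume "x \<in> U"
    then obtain V f' where V: "open V" "x \<in> V" "V \<subseteq> U" "\<forall>y\<in>V. (f has_derivative f' y) (at y)"
       "\<forall>v. Cn_on n (\<lambda>y. f' y v) V" using loc[OF \<open>x \<in> U\<close>] by blast
    have "\<And>y. y \<in> V \<Longrightarrow> f' y v = D y v"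
    proof -
      fix y assume "y \<in> V"
      then have "y \<in> U" using V(3) by blast
      have "f' y = D y" by (rule has_derivative_unique[OF V(4)[rule_format, OF \<open>y \<in> V\<close>] D[OF \<open>y \<in> U\<close>]])
      then show "f' y v = D y v" by simp
    qed
    moreover have "Cn_on n (\<lambda>y. f' y v) V" using V(5) by blast
    ultimately have "Cn_on n (\<lambda>y. D y v) V"
      using Cn_cong[OF V(1), of "\<lambda>y. f' y v" "\<lambda>y. D y v" n] by blast
    then show "\<exists>V. open V \<and> x \<in> V \<and> V \<subseteq> U \<and> Cn_on n (\<lambda>y. D y v) V"
      using V(1,2,3) by blast
  qed
  then show ?case using D unfolding Cn_on.simps
    by (intro exI[where x=D] conjI ballI allI) auto
qed

lemma Cn_inverse: "Cn_on n (inverse :: 'f::{real_normed_div_algebra,euclidean_space} \<Rightarrow> 'f) (-{0})"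
proof (induction n)
  case 0 then show ?case by (auto intro!: continuous_on_inverse continuous_on_id)
next
  case (Suc n)
  have "\<forall>x\<in>-{0}. (inverse has_derivative (\<lambda>h. - (inverse x * h * inverse (x::'f)))) (at x)"
    using has_derivative_inverse' by blast
  moreover have "Cn_on n (\<lambda>x. - (inverse x * v * inverse (x::'f))) (-{0})" for v
    by (intro Cn_linear_comp[OF bounded_linear_minus[OF bounded_linear_ident]] Cn_mult Suc Cn_const)
  ultimately show ?case unfolding Cn_on.simps
    by (intro exI[where x="\<lambda>x h. - (inverse x * h * inverse (x::'f))"]) blast
qed

lemma Cn_inverse_comp:
  fixes f :: "'e::euclidean_space \<Rightarrow> 'f::{real_normed_div_algebra,euclidean_space}"
  shows "Cn_on n f U \<Longrightarrow> (\<And>x. x \<in> U \<Longrightarrow> f x \<noteq> 0) \<Longrightarrow> Cn_on n (\<lambda>x. inverse (f x)) U"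
  by (rule Cn_chain[OF Cn_inverse]) auto

lemma Ck_cont: "Ck_on k g U \<Longrightarrow> continuous_on U g"
  unfolding Ck_on_def using Cn_on.simps(1) zero_enat_def zero_le by metis

lemma Ck_const: "Ck_on k (\<lambda>x. c) U"
  by (simp add: Ck_on_def Cn_const)

lemma Ck_mult: "Ck_on k a U \<Longrightarrow> Ck_on k b U \<Longrightarrow> Ck_on k (\<lambda>x. a x * b x :: 'f::real_normed_algebra) U"
  by (simp add: Ck_on_def Cn_mult)

lemma Ck_subset: "V \<subseteq> U \<Longrightarrow> Ck_on k f U \<Longrightarrow> Ck_on k f V"
  unfolding Ck_on_def using Cn_subset by blast

lemma Ck_cong: "open U \<Longrightarrow> (\<And>x. x \<in> U \<Longrightarrow> f x = g x) \<Longrightarrow> Ck_on k f U \<Longrightarrow> Ck_on k g U"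
  unfolding Ck_on_def using Cn_cong by blast

lemma Ck_local:
  assumes "open U" and loc: "\<And>x. x \<in> U \<Longrightarrow> \<exists>V. open V \<and> x \<in> V \<and> V \<subseteq> U \<and> Ck_on k f V"
  shows "Ck_on k f U"
  unfolding Ck_on_def
proof (intro allI impI)
  fix n assume n: "enat n \<le> k"
  show "Cn_on n f U"
  proof (rule Cn_local[OF assms(1)])
    fix x assume "x \<in> U"
    then obtain V where "open V" "x \<in> V" "V \<subseteq> U" "Ck_on k f V" using loc by blast
    then show "\<exists>V. open V \<and> x \<in> V \<and> V \<subseteq> U \<and> Cn_on n f V" using n unfolding Ck_on_def by blast
  qed
qed

lemma Ck_chain:
  fixes h :: "'e::euclidean_space \<Rightarrow> 'e2::euclidean_space" and g :: "'e2 \<Rightarrow> 'f::real_normed_vector"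
  shows "(\<And>n. Cn_on n g V) \<Longrightarrow> Ck_on k h U \<Longrightarrow> h ` U \<subseteq> V \<Longrightarrow> Ck_on k (\<lambda>x. g (h x)) U"
  unfolding Ck_on_def using Cn_chain by blast

lemma Ck_inverse_comp:
  fixes f :: "'e::euclidean_space \<Rightarrow> 'f::{real_normed_div_algebra,euclidean_space}"
  shows "Ck_on k f U \<Longrightarrow> (\<And>x. x \<in> U \<Longrightarrow> f x \<noteq> 0) \<Longrightarrow> Ck_on k (\<lambda>x. inverse (f x)) U"
  unfolding Ck_on_def using Cn_inverse_comp by blast

subsection \<open>Smooth step functions and bumps\<close>

text \<open>The functions t \<mapsto> p(1/t) e^(-1/t) for t > 0, extended by 0; their derivatives are of
  the same form, so they are all C^\<infinity> on the real line.\<close>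
definition flat_fun :: "real poly \<Rightarrow> real \<Rightarrow> real" where
  "flat_fun p t = (if 0 < t then poly p (inverse t) * exp (- inverse t) else 0)"

text \<open>The polynomial describing the derivative: (flat_fun p)' = flat_fun (flat_deriv_poly p).\<close>
definition flat_deriv_poly :: "real poly \<Rightarrow> real poly" where
  "flat_deriv_poly p = [:0,0,1:] * (p - pderiv p)"

lemma poly_times_exp_minus_tendsto_0: "((\<lambda>s::real. poly r s * exp (- s)) \<longlongrightarrow> 0) at_top"
proof -
  have "((\<lambda>s::real. \<Sum>i\<le>degree r. coeff r i * (s ^ i / exp s)) \<longlongrightarrow> (\<Sum>i\<le>degree r. coeff r i * 0)) at_top"
    by (intro tendsto_sum tendsto_mult tendsto_const tendsto_power_div_exp_0)
  moreover have "poly r s * exp (- s) = (\<Sum>i\<le>degree r. coeff r i * (s ^ i / exp s))" for s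
    by (simp add: poly_altdef sum_distrib_right exp_minus divide_inverse mult.assoc)
  ultimately show ?thesis by simp
qed

text \<open>At t = 0 both one-sided difference quotients tend to 0: on the left the function
  vanishes, on the right the quotient is (s p(s)) e^(-s) with s = 1/t \<rightarrow> \<infinity>.\<close>
lemma flat_fun_deriv: "(flat_fun p has_real_derivative flat_fun (flat_deriv_poly p) t) (at t)"
proof (cases "0 < t")
  case True
  have "((\<lambda>t. poly p (inverse t) * exp (- inverse t)) has_real_derivative
     poly (pderiv p) (inverse t) * (- (inverse t * inverse t)) * exp (- inverse t) +
     poly p (inverse t) * (exp (- inverse t) * (inverse t * inverse t))) (at t)"
    using True
    by (auto intro!: derivative_eq_intros DERIV_chain2[OF poly_DERIV] simp: power2_eq_square)
  moreover have "poly (pderiv p) (inverse t) * (- (inverse t * inverse t)) * exp (- inverse t) +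
     poly p (inverse t) * (exp (- inverse t) * (inverse t * inverse t)) = flat_fun (flat_deriv_poly p) t"
    using True by (simp add: flat_fun_def flat_deriv_poly_def algebra_simps)
  ultimately have "((\<lambda>t. poly p (inverse t) * exp (- inverse t))
      has_real_derivative flat_fun (flat_deriv_poly p) t) (at t)"
    by simp
  then show ?thesis
    by (rule has_field_derivative_transform_within_open[where S="{0<..}"])
      (use True in \<open>auto simp: flat_fun_def\<close>)
next
  case False
  show ?thesis
  proof (cases "t < 0")
    case True
    have "((\<lambda>_. 0) has_real_derivative flat_fun (flat_deriv_poly p) t) (at t)"
      using True by (simp add: flat_fun_def)
    then show ?thesis
      by (rule has_field_derivative_transform_within_open[where S="{..<0}"])
        (use True in \<open>auto simp: flat_fun_def\<close>)
  next
    case False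
    with \<open>\<not> 0 < t\<close> have t0: "t = 0" by simp
    have "((\<lambda>y. flat_fun p y / y) \<longlongrightarrow> 0) (at_left 0)"
    proof (rule tendsto_eventually)
      show "\<forall>\<^sub>F y in at_left 0. flat_fun p y / y = 0"
        unfolding eventually_at_left_field by (auto simp: flat_fun_def intro!: exI[of _ "-1"])
    qed
    moreover have "((\<lambda>y. flat_fun p y / y) \<longlongrightarrow> 0) (at_right 0)"
    proof -
      have "((\<lambda>y. poly (p * [:0,1:]) (inverse y) * exp (- inverse y)) \<longlongrightarrow> 0) (at_right 0)"
        using filterlim_compose poly_times_exp_minus_tendsto_0 filterlim_inverse_at_top_right by blast
      moreover have "\<forall>\<^sub>F y in at_right 0. poly (p * [:0,1:]) (inverse y) * exp (- inverse y) = flat_fun p y / y"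
        unfolding eventually_at_right_field by (auto simp: flat_fun_def field_simps intro!: exI[of _ 1])
      ultimately show ?thesis using tendsto_cong by fastforce
    qed
    ultimately have "((\<lambda>y. flat_fun p y / y) \<longlongrightarrow> 0) (at 0)"
      by (simp add: filterlim_at_split)
    then show ?thesis unfolding t0 has_field_derivative_iff by (simp add: flat_fun_def)
  qed
qed

lemma Cn_flat_fun: "Cn_on n (flat_fun p) UNIV"
proof (induction n arbitrary: p)
  case 0
  have "isCont (flat_fun p) x" for x using flat_fun_deriv DERIV_isCont by blast
  then show ?case by (auto intro!: continuous_at_imp_continuous_on)
next
  case (Suc n)
  have "\<forall>t\<in>UNIV. (flat_fun p has_derivative (\<lambda>h. flat_fun (flat_deriv_poly p) t * h)) (at t)"
    using flat_fun_deriv unfolding has_field_derivative_def by blast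
  moreover have "Cn_on n (\<lambda>t. flat_fun (flat_deriv_poly p) t * v) UNIV" for v
    by (intro Cn_mult Suc Cn_const)
  ultimately show ?case unfolding Cn_on.simps
    by (intro exI[where x="\<lambda>t h. flat_fun (flat_deriv_poly p) t * h"] conjI ballI allI) auto
qed

lemma flat_fun_1: "flat_fun 1 t = (if 0 < t then exp (- inverse t) else 0)"
  by (simp add: flat_fun_def)

definition smooth_step :: "real \<Rightarrow> real" where
  "smooth_step t = flat_fun 1 t * inverse (flat_fun 1 t + flat_fun 1 (1 - t))"

lemma Cn_smooth_step: "Cn_on n smooth_step UNIV"
proof -
  have reflect: "Cn_on n (\<lambda>t::real. 1 - t) UNIV"
    using Cn_add[OF Cn_const Cn_linear[OF bounded_linear_minus[OF bounded_linear_ident]],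
        of n "1::real" UNIV] by simp
  have denom: "Cn_on n (\<lambda>t. flat_fun 1 t + flat_fun 1 (1 - t)) UNIV"
    by (intro Cn_add Cn_flat_fun Cn_chain[OF Cn_flat_fun reflect]) auto
  have pos: "flat_fun 1 t + flat_fun 1 (1 - t) \<noteq> 0" for t
  proof -
    have "0 < flat_fun 1 t + flat_fun 1 (1 - t)"
      by (cases "0 < t") (auto simp: flat_fun_1 add_pos_nonneg add_nonneg_pos)
    then show ?thesis by simp
  qed
  show ?thesis unfolding smooth_step_def
    by (intro Cn_mult Cn_flat_fun Cn_inverse_comp denom pos)
qed

lemma smooth_step_0: "t \<le> 0 \<Longrightarrow> smooth_step t = 0"
  by (simp add: smooth_step_def flat_fun_1)

lemma smooth_step_1: "1 \<le> t \<Longrightarrow> smooth_step t = 1"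
  by (simp add: smooth_step_def flat_fun_1)

definition smooth_bump :: "'e::euclidean_space \<Rightarrow> real \<Rightarrow> real \<Rightarrow> 'e \<Rightarrow> 'f::real_normed_algebra_1" where
  "smooth_bump c a b y = of_real (smooth_step ((b - (y - c) \<bullet> (y - c)) / (b - a)))"

lemma Cn_smooth_bump: "Cn_on n (smooth_bump c a b) UNIV"
proof -
  have "Cn_on n (\<lambda>y. y + (- c)) UNIV" by (intro Cn_add Cn_linear[OF bounded_linear_ident] Cn_const)
  then have y: "Cn_on n (\<lambda>y. y - c) UNIV" by simp
  have q: "Cn_on n (\<lambda>y. (y - c) \<bullet> (y - c)) UNIV"
    by (rule Cn_bilinear[OF bounded_bilinear_inner y y])
  have "Cn_on n (\<lambda>y. (b + - ((y - c) \<bullet> (y - c))) * inverse (b - a)) UNIV"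
    by (intro Cn_mult Cn_add Cn_const Cn_linear_comp[OF bounded_linear_minus[OF bounded_linear_ident] q])
  then have "Cn_on n (\<lambda>y. (b - (y - c) \<bullet> (y - c)) / (b - a)) UNIV"
    by (simp add: divide_inverse)
  then show ?thesis unfolding smooth_bump_def[abs_def]
    by (intro Cn_linear_comp[OF bounded_linear_of_real] Cn_chain[OF Cn_smooth_step]) auto
qed

lemma smooth_bump_1: "a < b \<Longrightarrow> (y - c) \<bullet> (y - c) \<le> a \<Longrightarrow> smooth_bump c a b y = 1"
  by (simp add: smooth_bump_def smooth_step_1)

lemma smooth_bump_0: "a < b \<Longrightarrow> b \<le> (y - c) \<bullet> (y - c) \<Longrightarrow> smooth_bump c a b y = 0"
  by (simp add: smooth_bump_def smooth_step_0 divide_nonpos_pos)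

subsection \<open>The abstract theorem\<close>

abbreviation tsupport :: "('a::topological_space \<Rightarrow> 'f::zero) \<Rightarrow> 'a set" where
  "tsupport f \<equiv> closure {z. f z \<noteq> 0}"

lemma factor_one_on_tsupport:
  fixes e h :: "'a::topological_space \<Rightarrow> 'f::real_normed_field"
  assumes "continuous_on UNIV e" "(\<lambda>z. e z * h z) = h" "z \<in> tsupport h"
  shows "e z = 1"
proof -
  have "{z. h z \<noteq> 0} \<subseteq> {z. e z = 1}"
  proof
    fix w assume "w \<in> {z. h z \<noteq> 0}"
    moreover have "e w * h w = h w" using assms(2) by (metis (no_types))
    ultimately show "w \<in> {z. e z = 1}" by simp
  qed
  moreover have "closed {z. e z = 1}"
    by (rule closed_Collect_eq[OF assms(1)]) simp
  ultimately have "tsupport h \<subseteq> {z. e z = 1}" by (rule closure_minimal)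
  then show ?thesis using assms(3) by blast
qed

locale mult_bijection =
  fixes B C :: "('a::t2_space \<Rightarrow> 'f::real_normed_field) set" and T :: "('a \<Rightarrow> 'f) \<Rightarrow> 'a \<Rightarrow> 'f"
  assumes C_subset_B: "C \<subseteq> B"
    and zero_in_C: "(\<lambda>_. 0) \<in> C"
    and B_mult: "\<And>f g. f \<in> B \<Longrightarrow> g \<in> B \<Longrightarrow> (\<lambda>x. f x * g x) \<in> B"
    and C_mult: "\<And>f g. f \<in> C \<Longrightarrow> g \<in> C \<Longrightarrow> (\<lambda>x. f x * g x) \<in> C"
    and C_compact_support: "\<And>f. f \<in> C \<Longrightarrow> compact (tsupport f)"
    and B_continuous: "\<And>f. f \<in> B \<Longrightarrow> continuous_on UNIV f"
    and C_plateau: "\<And>x W. open W \<Longrightarrow> x \<in> W \<Longrightarrow>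
      \<exists>e\<in>C. \<exists>N. open N \<and> x \<in> N \<and> (\<forall>z\<in>N. e z = 1) \<and> tsupport e \<subseteq> W"
    and C_divide: "\<And>f e. f \<in> B \<Longrightarrow> e \<in> C \<Longrightarrow> tsupport e \<subseteq> {z. f z \<noteq> 0} \<Longrightarrow>
      (\<lambda>z. e z * inverse (f z)) \<in> C"
    and T_bij: "bij_betw T B B"
    and T_mult: "\<And>f g. f \<in> B \<Longrightarrow> g \<in> B \<Longrightarrow> T (\<lambda>x. f x * g x) = (\<lambda>x. T f x * T g x)"
    and T_bij_C: "bij_betw T C C"
begin

lemma T_inj: "f \<in> B \<Longrightarrow> g \<in> B \<Longrightarrow> T f = T g \<Longrightarrow> f = g"
  using T_bij by (metis bij_betw_def inj_onD)

lemma T_in_B: "f \<in> B \<Longrightarrow> T f \<in> B"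
  by (rule bij_betw_apply[OF T_bij])

lemma T_in_C: "f \<in> C \<Longrightarrow> T f \<in> C"
  by (rule bij_betw_apply[OF T_bij_C])

lemma T_onto_C: "g \<in> C \<Longrightarrow> \<exists>f\<in>C. T f = g"
  using T_bij_C by (metis bij_betw_def imageE)

lemma zero_in_B: "(\<lambda>_. 0) \<in> B"
  using zero_in_C C_subset_B by blast

lemma T_zero: "T (\<lambda>_. 0) = (\<lambda>_. 0)"
proof -
  obtain g where g: "g \<in> B" "T g = (\<lambda>_. 0)"
    using T_bij zero_in_B by (metis bij_betw_def imageE)
  have "T (\<lambda>x. 0 * g x) = (\<lambda>x. T (\<lambda>_. 0) x * T g x)" by (rule T_mult[OF zero_in_B g(1)])
  then show ?thesis using g by simp
qed

lemma T_disjoint: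
  assumes "f \<in> B" "g \<in> B" "\<And>z. f z * g z = 0"
  shows "T f z * T g z = 0"
proof -
  have "(\<lambda>x. T f x * T g x) = (\<lambda>_. 0)" using T_mult[OF assms(1,2)] assms(3) T_zero by simp
  from fun_cong[OF this, of z] show ?thesis by simp
qed

lemma open_cozero: "f \<in> B \<Longrightarrow> open {z. f z \<noteq> 0}"
  using open_Collect_neq[OF B_continuous continuous_on_const] by blast

lemma nested_plateaus:
  assumes "open W" "x \<in> W"
  obtains c b where "c \<in> C" "b \<in> C" "c x = 1" "b x = 1" "(\<lambda>z. c z * b z) = b" "tsupport c \<subseteq> W"
proof -
  obtain c N where c: "c \<in> C" "open N" "x \<in> N" "\<forall>z\<in>N. c z = 1" "tsupport c \<subseteq> W"
    using C_plateau[OF assms] by auto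
  obtain b N' where b: "b \<in> C" "x \<in> N'" "\<forall>z\<in>N'. b z = 1" "tsupport b \<subseteq> N"
    using C_plateau[OF c(2,3)] by auto
  have "c z * b z = b z" for z
    using b(4) c(4) closure_subset[of "{z. b z \<noteq> 0}"] by (cases "b z = 0") auto
  with that c b show ?thesis by blast
qed

definition image_candidates :: "'a \<Rightarrow> 'a set" where
  "image_candidates x = {y. \<forall>f\<in>C. f x \<noteq> 0 \<longrightarrow> y \<in> tsupport (T f)}"

text \<open>If x is outside the support of f, then T f vanishes at every candidate: take a
  plateau h at x supported away from f; then h f = 0, so T h \<cdot> T f = 0, while y lies in
  the support of T h.\<close>
lemma candidate_zero:
  assumes y: "y \<in> image_candidates x" and f: "f \<in> B" and x: "x \<notin> tsupport f"
  shows "T f y = 0"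
proof (rule ccontr)
  assume ne: "T f y \<noteq> 0"
  have "x \<in> - tsupport f" using x by simp
  then obtain h b where h: "h \<in> C" "b \<in> C" "h x = 1" "b x = 1" "(\<lambda>z. h z * b z) = b"
      "tsupport h \<subseteq> - tsupport f"
    by (rule nested_plateaus[OF open_Compl[OF closed_closure]])
  have hB: "h \<in> B" using h(1) C_subset_B by blast
  have "h z * f z = 0" for z
    using h(6) closure_subset[of "{z. h z \<noteq> 0}"] closure_subset[of "{z. f z \<noteq> 0}"] by auto
  then have disj: "{z. T f z \<noteq> 0} \<inter> {z. T h z \<noteq> 0} = {}"
    using T_disjoint[OF hB f] by auto
  have "y \<in> tsupport (T h)" using y h(1,3) unfolding image_candidates_def by auto
  moreover have "open {z. T f z \<noteq> 0}" using open_cozero T_in_B f by blast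
  ultimately show False
    using ne disj open_Int_closure_eq_empty[OF \<open>open {z. T f z \<noteq> 0}\<close>] by blast
qed

text \<open>If f x \<noteq> 0, then T f does not vanish at any candidate: with plateaus e (supported
  where f \<noteq> 0) and h (with e h = h), e = f \<cdot> (e/f) gives T e = T f \<cdot> T (e/f), and T e = 1
  on the support of T h, which contains y.\<close>
lemma candidate_nonzero:
  assumes y: "y \<in> image_candidates x" and f: "f \<in> B" and x: "f x \<noteq> 0"
  shows "T f y \<noteq> 0"
proof -
  have "x \<in> {z. f z \<noteq> 0}" using x by simp
  then obtain e h where eh: "e \<in> C" "h \<in> C" "e x = 1" "h x = 1" "(\<lambda>z. e z * h z) = h"
      "tsupport e \<subseteq> {z. f z \<noteq> 0}"
    by (rule nested_plateaus[OF open_cozero[OF f]])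
  define g where "g = (\<lambda>z. e z * inverse (f z))"
  have g: "g \<in> C" unfolding g_def by (rule C_divide[OF f eh(1,6)])
  have fg: "(\<lambda>z. f z * g z) = e"
  proof
    fix z show "f z * g z = e z"
      using eh(6) closure_subset[of "{z. e z \<noteq> 0}"] by (cases "f z = 0") (auto simp: g_def)
  qed
  have B: "e \<in> B" "h \<in> B" "g \<in> B" using eh(1,2) g C_subset_B by auto
  have "(\<lambda>z. T e z * T h z) = T h" using T_mult[OF B(1,2)] eh(5) by simp
  moreover have "y \<in> tsupport (T h)" using y eh(2,4) unfolding image_candidates_def by auto
  ultimately have "T e y = 1" using factor_one_on_tsupport[OF B_continuous[OF T_in_B[OF B(1)]]] by blast
  moreover have "T e = (\<lambda>z. T f z * T g z)" using T_mult[OF f B(3)] fg by simp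
  ultimately show ?thesis by (metis mult_zero_left zero_neq_one)
qed

text \<open>There is at most one candidate: separate two candidates by disjoint open sets, choose
  nested plateaus (c, b) and (c', b') there and pull them back through T; then
  T\<inverse>c \<cdot> T\<inverse>c' = 0, but both factors equal 1 at x.\<close>
lemma candidate_unique:
  assumes y: "y \<in> image_candidates x" and y': "y' \<in> image_candidates x"
  shows "y = y'"
proof (rule ccontr)
  assume "y \<noteq> y'"
  then obtain W W' where W: "open W" "open W'" "y \<in> W" "y' \<in> W'" "W \<inter> W' = {}"
    using hausdorff[OF \<open>y \<noteq> y'\<close>] by blast
  have pulled_back: "\<exists>g. g \<in> B \<and> g x = 1 \<and> tsupport (T g) \<subseteq> V"
    if y0: "y0 \<in> image_candidates x" and V: "open V" "y0 \<in> V" for y0 V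
  proof -
    obtain c b where cb: "c \<in> C" "b \<in> C" "c y0 = 1" "b y0 = 1" "(\<lambda>z. c z * b z) = b"
        "tsupport c \<subseteq> V"
      by (rule nested_plateaus[OF V])
    obtain g where g: "g \<in> C" "T g = c" using T_onto_C cb(1) by blast
    obtain f where f: "f \<in> C" "T f = b" using T_onto_C cb(2) by blast
    note gf = g f
    then have B: "g \<in> B" "f \<in> B" using C_subset_B by auto
    have gf_eq: "(\<lambda>z. g z * f z) = f"
      by (rule T_inj[OF B_mult[OF B] B(2)]) (simp add: T_mult[OF B] gf cb(5))
    have "x \<notin> tsupport f \<Longrightarrow> False"
      using candidate_zero[OF y0 B(2)] gf(4) cb(4) by simp
    then have "g x = 1" using factor_one_on_tsupport[OF B_continuous[OF B(1)] gf_eq] by blast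
    then show ?thesis using B(1) gf(2) cb(6) by blast
  qed
  obtain g where g: "g \<in> B" "g x = 1" "tsupport (T g) \<subseteq> W" using pulled_back[OF y W(1,3)] by blast
  obtain g' where g': "g' \<in> B" "g' x = 1" "tsupport (T g') \<subseteq> W'" using pulled_back[OF y' W(2,4)] by blast
  have "{z. T g z \<noteq> 0} \<subseteq> W" "{z. T g' z \<noteq> 0} \<subseteq> W'"
    using g(3) g'(3) closure_subset[of "{z. T g z \<noteq> 0}"] closure_subset[of "{z. T g' z \<noteq> 0}"]
    by blast+
  with W(5) have "T g z * T g' z = 0" for z by (cases "T g z = 0") auto
  then have "(\<lambda>z. T g z * T g' z) = (\<lambda>_. 0)" by (rule ext)
  then have "T (\<lambda>z. g z * g' z) = T (\<lambda>_. 0)" using T_mult[OF g(1) g'(1)] T_zero by simp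
  then have "(\<lambda>z. g z * g' z) = (\<lambda>_. 0)" by (rule T_inj[OF B_mult[OF g(1) g'(1)] zero_in_B])
  from fun_cong[OF this, of x] show False using g(2) g'(2) by simp
qed

text \<open>There is a candidate: the supports of T f, f \<in> C with f x \<noteq> 0, have the finite
  intersection property (finite products of such f are again such functions, and T of a
  nonzero function is nonzero) inside the compact support of T h0 for a plateau h0 at x.\<close>
lemma candidate_exists: "image_candidates x \<noteq> {}"
proof -
  obtain h0 N where h0: "h0 \<in> C" "x \<in> N" "\<forall>z\<in>N. h0 z = 1"
    using C_plateau[of UNIV x] by auto
  define F where "F = {tsupport (T f) | f. f \<in> C \<and> f x \<noteq> 0}"
  have fin: "\<exists>g\<in>C. g x \<noteq> 0 \<and> tsupport (T g) \<subseteq> tsupport (T h0) \<inter> \<Inter>F'"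
    if "finite F'" "F' \<subseteq> F" for F'
    using that
  proof (induction F' rule: finite_induct)
    case empty
    then show ?case using h0 by (intro bexI[of _ h0]) auto
  next
    case (insert A F')
    then obtain g where g: "g \<in> C" "g x \<noteq> 0" "tsupport (T g) \<subseteq> tsupport (T h0) \<inter> \<Inter>F'" by auto
    obtain f where f: "f \<in> C" "f x \<noteq> 0" "A = tsupport (T f)" using insert.prems F_def by auto
    have B: "f \<in> B" "g \<in> B" using f g C_subset_B by auto
    have "tsupport (T (\<lambda>z. f z * g z)) = tsupport (\<lambda>z. T f z * T g z)" using T_mult[OF B] by simp
    also have "\<dots> \<subseteq> tsupport (T f) \<inter> tsupport (T g)"
      by (intro Int_greatest closure_mono) auto
    finally show ?case using g f C_mult[OF f(1) g(1)] by (intro bexI[of _ "\<lambda>z. f z * g z"]) auto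
  qed
  have "tsupport (T h0) \<inter> \<Inter>F \<noteq> {}"
  proof (rule compact_imp_fip)
    show "compact (tsupport (T h0))" using C_compact_support T_in_C h0(1) by blast
    show "closed A" if "A \<in> F" for A using that F_def by auto
    fix F' assume F': "finite F'" "F' \<subseteq> F"
    obtain g where g: "g \<in> C" "g x \<noteq> 0" "tsupport (T g) \<subseteq> tsupport (T h0) \<inter> \<Inter>F'"
      using fin[OF F'] by blast
    have "T g \<noteq> (\<lambda>_. 0)"
    proof
      assume "T g = (\<lambda>_. 0)"
      then have "g = (\<lambda>_. 0)" using T_inj[of g "\<lambda>_. 0"] T_zero g(1) C_subset_B zero_in_B by auto
      then show False using g(2) by simp
    qed
    then obtain z where "T g z \<noteq> 0" by auto
    then have "z \<in> tsupport (T g)" using closure_subset[of "{z. T g z \<noteq> 0}"] by blast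
    then show "tsupport (T h0) \<inter> \<Inter>F' \<noteq> {}" using g(3) by blast
  qed
  then obtain y where "y \<in> \<Inter>F" by blast
  then have "y \<in> image_candidates x" unfolding image_candidates_def F_def by blast
  then show ?thesis by blast
qed

definition point_map :: "'a \<Rightarrow> 'a" where
  "point_map x = (SOME y. y \<in> image_candidates x)"

lemma point_map_candidate: "point_map x \<in> image_candidates x"
  unfolding point_map_def using candidate_exists by (simp add: some_in_eq)

lemma point_map_eqI: "(\<And>f. f \<in> C \<Longrightarrow> f x \<noteq> 0 \<Longrightarrow> y \<in> tsupport (T f)) \<Longrightarrow> point_map x = y"
  using candidate_unique[OF point_map_candidate] unfolding image_candidates_def by blast

lemma point_map_nonzero: "f \<in> B \<Longrightarrow> f x \<noteq> 0 \<Longrightarrow> T f (point_map x) \<noteq> 0"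
  by (rule candidate_nonzero[OF point_map_candidate])

lemma point_map_zero: "f \<in> B \<Longrightarrow> x \<notin> tsupport f \<Longrightarrow> T f (point_map x) = 0"
  by (rule candidate_zero[OF point_map_candidate])

text \<open>Once T f (point_map x) \<noteq> 0 forces f x \<noteq> 0 (this is where the inverse of T enters),
  the point map is continuous: the preimage of an open W \<ni> point_map x contains the open
  cozero set of T\<inverse> b around x, for a plateau b at point_map x supported in W.\<close>
lemma point_map_continuous:
  assumes reflect: "\<And>f x. f \<in> B \<Longrightarrow> T f (point_map x) \<noteq> 0 \<Longrightarrow> f x \<noteq> 0"
  shows "continuous_on UNIV point_map"
  unfolding continuous_on_open_vimage[OF open_UNIV]
proof (intro allI impI)
  fix W :: "'a set" assume W: "open W"
  have "\<exists>N. open N \<and> x \<in> N \<and> N \<subseteq> point_map -` W" if x: "x \<in> point_map -` W" for x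
  proof -
    obtain b N where b: "b \<in> C" "point_map x \<in> N" "\<forall>z\<in>N. b z = 1" "tsupport b \<subseteq> W"
      using C_plateau[OF W] x by blast
    obtain f where f: "f \<in> C" "T f = b" using T_onto_C[OF b(1)] by blast
    have fB: "f \<in> B" using f(1) C_subset_B by blast
    have "f x \<noteq> 0" using reflect[OF fB, of x] f(2) b(2,3) by simp
    moreover have "{z. f z \<noteq> 0} \<subseteq> point_map -` W"
      using point_map_nonzero[OF fB] f(2) b(4) closure_subset[of "{z. b z \<noteq> 0}"] by auto
    ultimately show ?thesis using open_cozero[OF fB] by blast
  qed
  then have "open (point_map -` W)" by (subst open_subopen) blast
  then show "open (point_map -` W \<inter> UNIV)" by simp
qed

end

lemma mult_bijection_inverse:
  assumes "mult_bijection B C T"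
  shows "mult_bijection B C (inv_into B T)"
proof -
  interpret mult_bijection B C T by fact
  have inj: "inj_on T B" using T_bij bij_betw_def by blast
  have T_inv_C: "bij_betw (inv_into B T) C C"
  proof -
    have "inv_into B T ` C = C"
    proof
      show "inv_into B T ` C \<subseteq> C"
      proof
        fix h assume "h \<in> inv_into B T ` C"
        then obtain g where g: "g \<in> C" "h = inv_into B T g" by blast
        obtain f where f: "f \<in> C" "T f = g" using T_onto_C[OF g(1)] by blast
        then have "inv_into B T (T f) = f" using C_subset_B inj by auto
        then show "h \<in> C" using g(2) f by simp
      qed
      show "C \<subseteq> inv_into B T ` C"
      proof
        fix f assume f: "f \<in> C"
        then have "inv_into B T (T f) = f" using C_subset_B inj by auto
        then show "f \<in> inv_into B T ` C" using T_in_C[OF f] by (simp add: rev_image_eqI)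
      qed
    qed
    moreover have "inj_on (inv_into B T) C"
      using bij_betw_inv_into[OF T_bij] C_subset_B inj_on_subset unfolding bij_betw_def by blast
    ultimately show ?thesis by (simp add: bij_betw_def)
  qed
  show ?thesis
  proof (rule mult_bijection.intro[OF C_subset_B zero_in_C B_mult C_mult C_compact_support
        B_continuous C_plateau C_divide bij_betw_inv_into[OF T_bij] _ T_inv_C])
    fix f g assume f: "f \<in> B" and g: "g \<in> B"
    let ?f = "inv_into B T f" and ?g = "inv_into B T g"
    have B: "?f \<in> B" "?g \<in> B" using f g bij_betw_apply[OF bij_betw_inv_into[OF T_bij]] by auto
    have "T (\<lambda>x. ?f x * ?g x) = (\<lambda>x. f x * g x)"
      using T_mult[OF B] f g T_bij by (simp add: bij_betw_inv_into_right)
    then show "inv_into B T (\<lambda>x. f x * g x) = (\<lambda>x. ?f x * ?g x)"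
      using inv_into_f_f[OF inj B_mult[OF B]] by simp
  qed
qed

text \<open>With u, v the point maps of T and T\<inverse>: v \<circ> u = id because
  T g (u x) = g (u x) \<noteq> 0 forces x into the support of T\<inverse> g, and symmetrically;
  consequently T f (u x) \<noteq> 0 \<longleftrightarrow> f x \<noteq> 0, which gives the zero sets and continuity.\<close>
theorem mult_bijection_homeomorphism:
  assumes "mult_bijection B C T"
  shows "\<exists>u v. homeomorphism UNIV UNIV u v \<and> (\<forall>f\<in>B. u ` zero_set f = zero_set (T f))"
proof -
  interpret a: mult_bijection B C T by fact
  interpret b: mult_bijection B C "inv_into B T" by (rule mult_bijection_inverse[OF assms])
  let ?S = "inv_into B T"
  define u where "u = a.point_map"
  define v where "v = b.point_map"
  have inj: "inj_on T B" using a.T_bij bij_betw_def by blast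
  have S_B: "g \<in> B \<Longrightarrow> ?S g \<in> B" for g by (rule b.T_in_B)
  have TS: "g \<in> B \<Longrightarrow> T (?S g) = g" for g using a.T_bij by (simp add: bij_betw_inv_into_right)
  have ST: "f \<in> B \<Longrightarrow> ?S (T f) = f" for f using inj by simp
  have vu: "v (u x) = x" for x
    unfolding v_def
  proof (rule b.point_map_eqI)
    fix g assume "g \<in> C" "g (u x) \<noteq> 0"
    then show "x \<in> tsupport (?S g)"
      using a.point_map_zero[OF S_B] TS a.C_subset_B unfolding u_def by force
  qed
  have uv: "u (v y) = y" for y
    unfolding u_def
  proof (rule a.point_map_eqI)
    fix f assume "f \<in> C" "f (v y) \<noteq> 0"
    then show "y \<in> tsupport (T f)"
      using b.point_map_zero[OF a.T_in_B] ST a.C_subset_B unfolding v_def by force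
  qed
  have T_reflect: "f x \<noteq> 0" if "f \<in> B" "T f (u x) \<noteq> 0" for f x
    using b.point_map_nonzero[OF a.T_in_B, of f "u x"] that ST vu unfolding v_def by simp
  have S_reflect: "g y \<noteq> 0" if "g \<in> B" "?S g (v y) \<noteq> 0" for g y
    using a.point_map_nonzero[OF S_B, of g "v y"] that TS uv unfolding u_def by simp
  have nonzero_iff: "T f (u x) \<noteq> 0 \<longleftrightarrow> f x \<noteq> 0" if "f \<in> B" for f x
    using T_reflect a.point_map_nonzero that unfolding u_def by blast
  have "continuous_on UNIV u"
    unfolding u_def by (rule a.point_map_continuous) (use T_reflect in \<open>unfold u_def, blast\<close>)
  moreover have "continuous_on UNIV v"
    unfolding v_def by (rule b.point_map_continuous) (use S_reflect in \<open>unfold v_def, blast\<close>)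
  ultimately have "homeomorphism UNIV UNIV u v"
    by (rule homeomorphismI) (auto simp: uv vu)
  moreover have "u ` zero_set f = zero_set (T f)" if "f \<in> B" for f
  proof
    show "u ` zero_set f \<subseteq> zero_set (T f)" using nonzero_iff[OF that] by (auto simp: zero_set_def)
    show "zero_set (T f) \<subseteq> u ` zero_set f"
    proof
      fix y assume "y \<in> zero_set (T f)"
      then have "v y \<in> zero_set f" using nonzero_iff[OF that, of "v y"] uv by (simp add: zero_set_def)
      then show "y \<in> u ` zero_set f" using uv by (metis imageI)
    qed
  qed
  ultimately show ?thesis by blast
qed

subsection \<open>C^k functions on a manifold\<close>

lemma chart:
  assumes "Ck_atlas k A" "(U, \<phi>) \<in> A"
  shows "open U" "open (\<phi> ` U)" "continuous_on U \<phi>" "continuous_on (\<phi> ` U) (inv_into U \<phi>)"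
    "\<And>z. z \<in> U \<Longrightarrow> inv_into U \<phi> (\<phi> z) = z"
    "\<And>p. p \<in> \<phi> ` U \<Longrightarrow> inv_into U \<phi> p \<in> U \<and> \<phi> (inv_into U \<phi> p) = p"
proof -
  have "open U" "open (\<phi> ` U)" "homeomorphism U (\<phi> ` U) \<phi> (inv_into U \<phi>)"
    using assms unfolding Ck_atlas_def by auto
  then show "open U" "open (\<phi> ` U)" "continuous_on U \<phi>" "continuous_on (\<phi> ` U) (inv_into U \<phi>)"
    "\<And>z. z \<in> U \<Longrightarrow> inv_into U \<phi> (\<phi> z) = z"
    "\<And>p. p \<in> \<phi> ` U \<Longrightarrow> inv_into U \<phi> p \<in> U \<and> \<phi> (inv_into U \<phi> p) = p"
    unfolding homeomorphism_def by auto
qed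

lemma chart_image_open:
  assumes "Ck_atlas k A" "(U, \<phi>) \<in> A" "open X"
  shows "open (\<phi> ` (U \<inter> X))"
proof -
  note c = chart[OF assms(1,2)]
  have "\<phi> ` (U \<inter> X) = inv_into U \<phi> -` X \<inter> \<phi> ` U"
    using c(5,6) by (auto simp: image_iff)
  moreover have "open (inv_into U \<phi> -` X \<inter> \<phi> ` U)"
    using c(2,4) assms(3) continuous_on_open_vimage by blast
  ultimately show ?thesis by simp
qed

lemma transition_map:
  "Ck_atlas k A \<Longrightarrow> (U, \<phi>) \<in> A \<Longrightarrow> (V, \<psi>) \<in> A \<Longrightarrow> Ck_on k (\<psi> \<circ> inv_into U \<phi>) (\<phi> ` (U \<inter> V))"
  unfolding Ck_atlas_def by blast

lemma atlas_covers:
  assumes "Ck_atlas k A"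
  obtains U \<phi> where "(U, \<phi>) \<in> A" "x \<in> U"
proof -
  have "x \<in> \<Union>(fst ` A)" using assms unfolding Ck_atlas_def by auto
  then show ?thesis using that by force
qed

lemma Ck_fun_chart: "Ck_fun k A f \<Longrightarrow> (U, \<phi>) \<in> A \<Longrightarrow> Ck_on k (\<lambda>q. f (inv_into U \<phi> q)) (\<phi> ` U)"
  unfolding Ck_fun_def comp_def by fast

lemma Ck_fun_continuous:
  fixes f :: "'a::t2_space \<Rightarrow> 'f::real_normed_vector"
  assumes atlas: "Ck_atlas k A" and f: "Ck_fun k A f"
  shows "continuous_on UNIV f"
proof -
  have "isCont f x" for x
  proof -
    obtain U \<phi> where U: "(U, \<phi>) \<in> A" "x \<in> U" using atlas_covers[OF atlas] by blast
    note c = chart[OF atlas U(1)]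
    have "continuous_on U (\<lambda>z. f (inv_into U \<phi> (\<phi> z)))"
      using continuous_on_compose2[OF Ck_cont[OF Ck_fun_chart[OF f U(1)]] c(3)] by blast
    then have "continuous_on U f" using continuous_on_cong c(5) by force
    then show ?thesis using continuous_on_eq_continuous_at[OF c(1)] U(2) by blast
  qed
  then show ?thesis by (simp add: continuous_at_imp_continuous_on)
qed

lemma Ck_funI_local:
  assumes atlas: "Ck_atlas k A"
    and loc: "\<And>z. \<exists>X. open X \<and> z \<in> X \<and>
      (\<forall>(V, \<psi>)\<in>A. Ck_on k (\<lambda>q. f (inv_into V \<psi> q)) (\<psi> ` (V \<inter> X)))"
  shows "Ck_fun k A f"
  unfolding Ck_fun_def comp_def
proof (intro ballI, clarify)
  fix V \<psi> assume V: "(V, \<psi>) \<in> A"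
  note cV = chart[OF atlas V]
  show "Ck_on k (\<lambda>q. f (inv_into V \<psi> q)) (\<psi> ` V)"
  proof (rule Ck_local[OF cV(2)])
    fix p assume p: "p \<in> \<psi> ` V"
    obtain X where X: "open X" "inv_into V \<psi> p \<in> X"
        "Ck_on k (\<lambda>q. f (inv_into V \<psi> q)) (\<psi> ` (V \<inter> X))"
      using loc[of "inv_into V \<psi> p"] V by blast
    have "p \<in> \<psi> ` (V \<inter> X)" using cV(6)[OF p] X(2) by (metis IntI image_eqI)
    then show "\<exists>Q. open Q \<and> p \<in> Q \<and> Q \<subseteq> \<psi> ` V \<and> Ck_on k (\<lambda>q. f (inv_into V \<psi> q)) Q"
      using chart_image_open[OF atlas V X(1)] X(3) by blast
  qed
qed

lemma Ck_chart_vanishing: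
  assumes atlas: "Ck_atlas k A" and V: "(V, \<psi>) \<in> A"
    and X: "open X" "\<And>z. z \<in> X \<Longrightarrow> f z = 0"
  shows "Ck_on k (\<lambda>q. f (inv_into V \<psi> q)) (\<psi> ` (V \<inter> X))"
proof (rule Ck_cong[OF chart_image_open[OF atlas V X(1)] _ Ck_const])
  fix q assume "q \<in> \<psi> ` (V \<inter> X)"
  then show "0 = f (inv_into V \<psi> q)" using chart(5)[OF atlas V] X(2) by auto
qed

lemma Ck_fun_extend_by_zero:
  assumes atlas: "Ck_atlas k A" and U: "(U, \<phi>) \<in> A"
    and g: "\<And>n. Cn_on n g UNIV" and K: "closed K" "K \<subseteq> U"
    and vanish: "\<And>z. z \<in> U \<Longrightarrow> z \<notin> K \<Longrightarrow> g (\<phi> z) = 0"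
  shows "Ck_fun k A (\<lambda>z. if z \<in> U then g (\<phi> z) else 0)" (is "Ck_fun k A ?e")
proof (rule Ck_funI_local[OF atlas])
  fix z show "\<exists>X. open X \<and> z \<in> X \<and> (\<forall>(V, \<psi>)\<in>A. Ck_on k (\<lambda>q. ?e (inv_into V \<psi> q)) (\<psi> ` (V \<inter> X)))"
  proof (cases "z \<in> U")
    case True
    have "Ck_on k (\<lambda>q. ?e (inv_into V \<psi> q)) (\<psi> ` (V \<inter> U))" if V: "(V, \<psi>) \<in> A" for V \<psi>
    proof (rule Ck_cong[OF chart_image_open[OF atlas V chart(1)[OF atlas U]]])
      show "Ck_on k (\<lambda>q. g ((\<phi> \<circ> inv_into V \<psi>) q)) (\<psi> ` (V \<inter> U))"
        by (rule Ck_chain[OF g transition_map[OF atlas V U] subset_UNIV])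
      fix q assume "q \<in> \<psi> ` (V \<inter> U)"
      then show "g ((\<phi> \<circ> inv_into V \<psi>) q) = ?e (inv_into V \<psi> q)"
        using chart(5)[OF atlas V] by auto
    qed
    then show ?thesis using True chart(1)[OF atlas U] by (intro exI[of _ U]) auto
  next
    case False
    then have "z \<in> - K" using K(2) by blast
    moreover have e0: "?e y = 0" if "y \<in> - K" for y using vanish that by simp
    have "Ck_on k (\<lambda>q. ?e (inv_into V \<psi> q)) (\<psi> ` (V \<inter> - K))" if "(V, \<psi>) \<in> A" for V \<psi>
      by (rule Ck_chart_vanishing[OF atlas that open_Compl[OF K(1)] e0])
    ultimately show ?thesis using open_Compl[OF K(1)] by (intro exI[of _ "- K"]) auto
  qed
qed

lemma compact_tsupport_mult:
  fixes f g :: "'a::topological_space \<Rightarrow> 'f::mult_zero"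
  assumes "compact (tsupport f)"
  shows "compact (tsupport (\<lambda>x. f x * g x))"
proof -
  have "tsupport (\<lambda>x. f x * g x) \<subseteq> tsupport f" by (rule closure_mono) auto
  moreover have "compact (tsupport f \<inter> tsupport (\<lambda>x. f x * g x))"
    by (rule compact_Int_closed[OF assms closed_closure])
  ultimately show ?thesis by (simp only: Int_absorb1)
qed

text \<open>Plateau functions: for x in an open W there is a C^k_c function, equal to 1 near x and
  supported in W.  It is a smooth bump in a chart around x, extended by zero.\<close>
lemma Ckc_plateau:
  fixes A :: "('a::t2_space set \<times> ('a \<Rightarrow> 'e::euclidean_space)) set"
  assumes atlas: "Ck_atlas k A" and W: "open W" "x \<in> W"
  shows "\<exists>e::'a \<Rightarrow> 'f::real_normed_field. Ckc_fun k A e \<and>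
     (\<exists>N. open N \<and> x \<in> N \<and> (\<forall>z\<in>N. e z = 1) \<and> tsupport e \<subseteq> W)"
proof -
  obtain U \<phi> where U: "(U, \<phi>) \<in> A" "x \<in> U" using atlas_covers[OF atlas] by blast
  note c = chart[OF atlas U(1)]
  have "\<phi> x \<in> \<phi> ` (U \<inter> W)" using U(2) W(2) by blast
  then obtain r where r: "r > 0" "cball (\<phi> x) r \<subseteq> \<phi> ` (U \<inter> W)"
    using chart_image_open[OF atlas U(1) W(1)] open_contains_cball by blast
  define \<beta> :: "'e \<Rightarrow> 'f" where "\<beta> = smooth_bump (\<phi> x) ((r/4)^2) ((r/2)^2)"
  have ab: "(r/4)^2 < (r/2)^2" using r(1) by (simp add: power_strict_mono)
  define e where "e z = (if z \<in> U then \<beta> (\<phi> z) else 0)" for z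
  define K where "K = inv_into U \<phi> ` cball (\<phi> x) (r/2)"
  have sub: "cball (\<phi> x) (r/2) \<subseteq> \<phi> ` (U \<inter> W)"
    using subset_cball[of "r/2" r "\<phi> x"] r by auto
  have K_compact: "compact K" unfolding K_def
    by (rule compact_continuous_image[OF continuous_on_subset[OF c(4)] compact_cball]) (use sub in auto)
  have K_sub: "K \<subseteq> U \<inter> W"
  proof
    fix z assume "z \<in> K"
    then obtain p where p: "p \<in> cball (\<phi> x) (r/2)" "z = inv_into U \<phi> p" unfolding K_def by blast
    then obtain w where "w \<in> U \<inter> W" "p = \<phi> w" using sub by blast
    then show "z \<in> U \<inter> W" using p(2) c(5) by auto
  qed
  have vanish: "\<beta> (\<phi> z) = 0" if "z \<in> U" "z \<notin> K" for z
  proof -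
    have "\<phi> z \<notin> cball (\<phi> x) (r/2)"
      using that c(5) unfolding K_def by (metis image_eqI)
    then have "r/2 \<le> norm (\<phi> z - \<phi> x)" by (simp add: dist_norm norm_minus_commute)
    then have "(r/2)^2 \<le> norm (\<phi> z - \<phi> x) ^ 2" using r(1) by (simp add: power_mono)
    then have "(r/2)^2 \<le> (\<phi> z - \<phi> x) \<bullet> (\<phi> z - \<phi> x)" by (simp add: power2_norm_eq_inner)
    then show ?thesis unfolding \<beta>_def by (rule smooth_bump_0[OF ab])
  qed
  have e_Ck: "Ck_fun k A e"
    unfolding e_def
    by (rule Ck_fun_extend_by_zero[OF atlas U(1) _ compact_imp_closed[OF K_compact]])
      (use K_sub vanish in \<open>auto simp: \<beta>_def Cn_smooth_bump\<close>)
  have "{z. e z \<noteq> 0} \<subseteq> K" using vanish K_sub unfolding e_def by auto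
  then have supp_K: "tsupport e \<subseteq> K" by (rule closure_minimal[OF _ compact_imp_closed[OF K_compact]])
  then have "compact (tsupport e)"
    using compact_Int_closed[OF K_compact closed_closure, of "{z. e z \<noteq> 0}"] by (metis Int_absorb1)
  moreover define N where "N = \<phi> -` ball (\<phi> x) (r/4) \<inter> U"
  moreover have "open N" unfolding N_def using continuous_on_open_vimage[OF c(1)] c(3) by blast
  moreover have "x \<in> N" unfolding N_def using U(2) r(1) by simp
  moreover have "e z = 1" if "z \<in> N" for z
  proof -
    have "norm (\<phi> z - \<phi> x) \<le> r/4" using that unfolding N_def by (simp add: dist_norm norm_minus_commute)
    then have "(\<phi> z - \<phi> x) \<bullet> (\<phi> z - \<phi> x) \<le> (r/4)^2" using norm_le_square by blast
    then show ?thesis using that unfolding e_def \<beta>_def N_def by (simp add: smooth_bump_1[OF ab])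
  qed
  ultimately show ?thesis using e_Ck supp_K K_sub unfolding Ckc_fun_def by blast
qed

lemma Ckc_mult:
  assumes f: "Ckc_fun k A f" and g: "Ckc_fun k A g"
  shows "Ckc_fun k A (\<lambda>x. f x * g x :: 'f::real_normed_field)"
proof -
  have "Ck_fun k A (\<lambda>x. f x * g x)"
    using f g unfolding Ckc_fun_def Ck_fun_def comp_def by (auto intro: Ck_mult)
  moreover have "compact (tsupport (\<lambda>x. f x * g x))"
    by (rule compact_tsupport_mult) (use f in \<open>simp add: Ckc_fun_def\<close>)
  ultimately show ?thesis unfolding Ckc_fun_def by blast
qed

text \<open>Division of a C^k_c function e by a C^k function f without zeros on the support of
  e: near zeros of f the quotient vanishes identically, elsewhere it is a product of C^k
  functions in charts.\<close>
lemma Ckc_divide: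
  fixes A :: "('a::t2_space set \<times> ('a \<Rightarrow> 'e::euclidean_space)) set"
    and f e :: "'a \<Rightarrow> 'f::{real_normed_field,euclidean_space}"
  assumes atlas: "Ck_atlas k A" and f: "Ck_fun k A f" and e: "Ckc_fun k A e"
    and supp: "tsupport e \<subseteq> {z. f z \<noteq> 0}"
  shows "Ckc_fun k A (\<lambda>z. e z * inverse (f z))"
proof -
  have "Ck_fun k A (\<lambda>z. e z * inverse (f z))"
  proof (rule Ck_funI_local[OF atlas])
    fix z
    show "\<exists>X. open X \<and> z \<in> X \<and> (\<forall>(V, \<psi>)\<in>A.
      Ck_on k (\<lambda>q. e (inv_into V \<psi> q) * inverse (f (inv_into V \<psi> q))) (\<psi> ` (V \<inter> X)))"
    proof (cases "f z = 0")
      case False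
      let ?X = "{z. f z \<noteq> 0}"
      have "Ck_on k (\<lambda>q. e (inv_into V \<psi> q) * inverse (f (inv_into V \<psi> q))) (\<psi> ` (V \<inter> ?X))"
        if V: "(V, \<psi>) \<in> A" for V \<psi>
      proof (rule Ck_mult)
        have sub: "\<psi> ` (V \<inter> ?X) \<subseteq> \<psi> ` V" by blast
        show "Ck_on k (\<lambda>q. e (inv_into V \<psi> q)) (\<psi> ` (V \<inter> ?X))"
          using Ck_subset[OF sub Ck_fun_chart[OF _ V]] e unfolding Ckc_fun_def by blast
        show "Ck_on k (\<lambda>q. inverse (f (inv_into V \<psi> q))) (\<psi> ` (V \<inter> ?X))"
          by (rule Ck_inverse_comp[OF Ck_subset[OF sub Ck_fun_chart[OF f V]]])
            (use chart(5)[OF atlas V] in auto)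
      qed
      moreover have "open ?X"
        using open_Collect_neq[OF Ck_fun_continuous[OF atlas f] continuous_on_const] by blast
      ultimately show ?thesis using False by (intro exI[of _ ?X]) auto
    next
      case True
      then have "z \<in> - tsupport e" using supp by blast
      moreover have e0: "e y * inverse (f y) = 0" if "y \<in> - tsupport e" for y
        using that closure_subset[of "{z. e z \<noteq> 0}"] by auto
      have "Ck_on k (\<lambda>q. e (inv_into V \<psi> q) * inverse (f (inv_into V \<psi> q))) (\<psi> ` (V \<inter> - tsupport e))"
        if "(V, \<psi>) \<in> A" for V \<psi>
        by (rule Ck_chart_vanishing[OF atlas that open_Compl[OF closed_closure] e0])
      ultimately show ?thesis by (intro exI[of _ "- tsupport e"]) auto
    qed
  qed
  moreover have "compact (tsupport (\<lambda>z. e z * inverse (f z)))"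
    by (rule compact_tsupport_mult) (use e in \<open>simp add: Ckc_fun_def\<close>)
  ultimately show ?thesis unfolding Ckc_fun_def by blast
qed

lemma Ckc_zero: "Ckc_fun k A (\<lambda>_. 0 :: 'f::real_normed_vector)"
  by (simp add: Ckc_fun_def Ck_fun_def comp_def Ck_const)

theorem proposition2p6:
  fixes k :: enat
    and A :: "('a::{t2_space, second_countable_topology} set \<times> ('a \<Rightarrow> 'e::euclidean_space)) set"
    and B :: "('a \<Rightarrow> 'f::{real_normed_field, euclidean_space}) set"
    and T :: "('a \<Rightarrow> 'f) \<Rightarrow> ('a \<Rightarrow> 'f)"
  assumes atlas: "Ck_atlas k A"
    and B_mult: "\<And>f g. f \<in> B \<Longrightarrow> g \<in> B \<Longrightarrow> (\<lambda>x. f x * g x) \<in> B"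
    and B_lower: "{f. Ckc_fun k A f} \<subseteq> B"
    and B_upper: "B \<subseteq> {f. Ck_fun k A f}"
    and T_bij: "bij_betw T B B"
    and T_mult: "\<And>f g. f \<in> B \<Longrightarrow> g \<in> B \<Longrightarrow> T (\<lambda>x. f x * g x) = (\<lambda>x. T f x * T g x)"
    and T_c: "bij_betw T {f. Ckc_fun k A f} {f. Ckc_fun k A f}"
  shows "\<exists>u v. homeomorphism UNIV UNIV u v \<and> (\<forall>f\<in>B. u ` zero_set f = zero_set (T f))"
proof -
  let ?C = "{f :: 'a \<Rightarrow> 'f. Ckc_fun k A f}"
  have C_mult: "(\<lambda>x. f x * g x) \<in> ?C" if "f \<in> ?C" "g \<in> ?C" for f g
    using that Ckc_mult[of k A f g] by simp
  have B_continuous: "continuous_on UNIV f" if "f \<in> B" for f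
    using that B_upper by (auto intro: Ck_fun_continuous[OF atlas])
  have plateau: "\<exists>e\<in>?C. \<exists>N. open N \<and> x \<in> N \<and> (\<forall>z\<in>N. e z = 1) \<and> tsupport e \<subseteq> W"
    if "open W" "x \<in> W" for x W
    using Ckc_plateau[OF atlas that] by simp
  have divide: "(\<lambda>z. e z * inverse (f z)) \<in> ?C"
    if "f \<in> B" "e \<in> ?C" "tsupport e \<subseteq> {z. f z \<noteq> 0}" for f e
    using Ckc_divide[OF atlas _ _ that(3)] that(1,2) B_upper by auto
  have zero: "(\<lambda>_. 0) \<in> ?C" by (simp add: Ckc_zero)
  have compact_support: "compact (tsupport f)" if "f \<in> ?C" for f
    using that by (simp add: Ckc_fun_def)
  have "mult_bijection B ?C T"
    by (rule mult_bijection.intro[OF B_lower zero B_mult C_mult compact_support B_continuous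
          plateau divide T_bij T_mult T_c])
  then show ?thesis by (rule mult_bijection_homeomorphism)
qed

end
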